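(* The semigroup $s\mathcal{R}(\mathfrak{S}_n)=\mathcal{R}(\mathfrak{S}_n)\setminus\mathfrak{S}_n$ is generated by the elements $z^r_{i,j}$ and $e_{i,j}$ ($r\in[n-1]$, $i,j\in[n]$, $i<j$).
   Context: $\mathfrak{C}_n$ is the partition monoid (set partitions of $[2n]$, top points $1..n$, bottom $n+1..2n$, concatenation product $*$). $I\preceq J$ means each block of $J$ is a union of blocks of $I$. $\mathfrak{S}_n\subseteq\mathfrak{C}_n$ consists of the partitions with all blocks $\{i,n+j\}$; $s_r$ are the simple transpositions; $1=\{\{i,n+i\}\}$. $\mathcal{R}(\mathfrak{S}_n)$ is the monoid of pairs $(I,J)$ of set partitions of $[2n]$ with $I\in\mathfrak{S}_n$, $I\preceq J$, product $(I,J)(H,K)=(I*H,J*K)$; $\mathfrak{S}_n$ is identified with $\{(w,w)\}$. For $i<j$, $e_{i,j}=(1,J_{i,j})$, where $J_{i,j}$ is obtained from $1$ by merging the blocks $\{i,n+i\}$ and $\{j,n+j\}$, and $z^r_{i,j}=e_{i,j}s_r$. *)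

theory Defs
  imports "HOL-Library.Disjoint_Sets"
begin

type_synonym setpart = "nat set set"

text \<open>Set partitions of [2n]: top points 1..n, bottom points n+1..2n.\<close>
definition setparts :: "nat \<Rightarrow> setpart set" where
  "setparts n = {P. partition_on {1..2*n} P}"

text \<open>Concatenation product in the partition monoid C_n: I is placed on top of H,
  the bottom row of I (points n+1..2n) is identified with the top row of H.
  Points of I keep their labels (1..2n); a point y of H is relabelled y+n, so
  the top row of H becomes n+1..2n and its bottom row becomes 2n+1..3n.
  Blocks of the product are the connected components restricted to the outer rows.\<close>
definition pm_link :: "nat \<Rightarrow> setpart \<Rightarrow> setpart \<Rightarrow> (nat \<times> nat) set" where
  "pm_link n I H =
     {(a, b). \<exists>B\<in>I. a \<in> B \<and> b \<in> B} \<union> {(a + n, b + n) | a b. \<exists>B\<in>H. a \<in> B \<and> b \<in> B}"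

definition pm_lift :: "nat \<Rightarrow> nat \<Rightarrow> nat" where
  "pm_lift n p = (if p \<le> n then p else p + n)"

definition pm_mult :: "nat \<Rightarrow> setpart \<Rightarrow> setpart \<Rightarrow> setpart" where
  "pm_mult n I H =
     (\<lambda>p. {q \<in> {1..2*n}. (pm_lift n p, pm_lift n q) \<in> (pm_link n I H)\<^sup>*}) ` {1..2*n}"

definition refines :: "setpart \<Rightarrow> setpart \<Rightarrow> bool" where
  "refines I J \<longleftrightarrow> (\<forall>B\<in>J. \<exists>S\<subseteq>I. B = \<Union>S)"

definition symgrp :: "nat \<Rightarrow> setpart set" where
  "symgrp n = {P \<in> setparts n. \<forall>B\<in>P. \<exists>i\<in>{1..n}. \<exists>j\<in>{1..n}. B = {i, n + j}}"

definition pm_one :: "nat \<Rightarrow> setpart" where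
  "pm_one n = (\<lambda>i. {i, n + i}) ` {1..n}"

definition simple_transp :: "nat \<Rightarrow> nat \<Rightarrow> setpart" where
  "simple_transp n r =
     (\<lambda>i. {i, n + (if i = r then r + 1 else if i = r + 1 then r else i)}) ` {1..n}"

definition RS :: "nat \<Rightarrow> (setpart \<times> setpart) set" where
  "RS n = {(I, J). I \<in> symgrp n \<and> J \<in> setparts n \<and> refines I J}"

definition RS_mult :: "nat \<Rightarrow> setpart \<times> setpart \<Rightarrow> setpart \<times> setpart \<Rightarrow> setpart \<times> setpart" where
  "RS_mult n x y = (pm_mult n (fst x) (fst y), pm_mult n (snd x) (snd y))"

definition RS_sym :: "nat \<Rightarrow> (setpart \<times> setpart) set" where
  "RS_sym n = (\<lambda>w. (w, w)) ` symgrp n"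

definition Jmerge :: "nat \<Rightarrow> nat \<Rightarrow> nat \<Rightarrow> setpart" where
  "Jmerge n i j = (pm_one n - {{i, n + i}, {j, n + j}}) \<union> {{i, n + i, j, n + j}}"

definition e_gen :: "nat \<Rightarrow> nat \<Rightarrow> nat \<Rightarrow> setpart \<times> setpart" where
  "e_gen n i j = (pm_one n, Jmerge n i j)"

definition z_gen :: "nat \<Rightarrow> nat \<Rightarrow> nat \<Rightarrow> nat \<Rightarrow> setpart \<times> setpart" where
  "z_gen n r i j = RS_mult n (e_gen n i j) (simple_transp n r, simple_transp n r)"

inductive_set gen_semigroup :: "('a \<Rightarrow> 'a \<Rightarrow> 'a) \<Rightarrow> 'a set \<Rightarrow> 'a set"
  for mult :: "'a \<Rightarrow> 'a \<Rightarrow> 'a" and G :: "'a set" where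
  base: "x \<in> G \<Longrightarrow> x \<in> gen_semigroup mult G"
| step: "x \<in> gen_semigroup mult G \<Longrightarrow> y \<in> gen_semigroup mult G \<Longrightarrow> mult x y \<in> gen_semigroup mult G"

end

theory Submission
  imports Defs "HOL-Combinatorics.Permutations"
begin

text \<open>
  An element of R(S_n) is a pair (w, J) where w is the diagram of a permutation and every block
  of w lies inside a block of J. It lies outside S_n exactly when some block of J contains two
  top points, and right multiplication keeps such a block, so all generators lie in the
  semigroup R(S_n) - S_n. Conversely, if the top points a and b share a block of J, cutting the
  column {b, n + b} out of that block gives a partition J' with (1, J) = (1, J') e_{a,b};
  repeating this reduces (1, J) to a single e_{a,b}. For a general permutation,
  (w s_r, J) = (w, J') z^r_{i,j}, where J' is J with its bottom row relabelled by s_r and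
  n + i, n + j are the bottom points of J' under two top points of a common block; induction
  over a factorisation of w into adjacent transpositions finishes the proof.
\<close>

section \<open>Partitions as equivalence relations\<close>

definition block_rel :: "'a set set \<Rightarrow> ('a \<times> 'a) set" where
  "block_rel P = {(x, y). \<exists>B\<in>P. x \<in> B \<and> y \<in> B}"

lemma equiv_block_rel: "partition_on A P \<Longrightarrow> equiv A (block_rel P)"
  unfolding block_rel_def by (rule equiv_partition_on)

lemma block_rel_sym: "(x, y) \<in> block_rel P \<Longrightarrow> (y, x) \<in> block_rel P"
  by (auto simp: block_rel_def)

lemma block_rel_trans:
  "partition_on A P \<Longrightarrow> (x, y) \<in> block_rel P \<Longrightarrow> (y, z) \<in> block_rel P \<Longrightarrow> (x, z) \<in> block_rel P"
  using equiv_block_rel[of A P] unfolding equiv_def trans_def by blast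

lemma block_rel_refl: "partition_on A P \<Longrightarrow> x \<in> A \<Longrightarrow> (x, x) \<in> block_rel P"
  using equiv_block_rel[of A P] unfolding equiv_def refl_on_def by blast

lemma block_rel_memD: "partition_on A P \<Longrightarrow> (x, y) \<in> block_rel P \<Longrightarrow> x \<in> A \<and> y \<in> A"
  unfolding block_rel_def partition_on_def by blast

lemma block_rel_quotient:
  assumes "equiv A r" shows "block_rel (A // r) = r"
proof
  show "block_rel (A // r) \<subseteq> r"
    using assms in_quotient_imp_in_rel by (fastforce simp: block_rel_def)
  show "r \<subseteq> block_rel (A // r)"
  proof (rule subrelI)
    fix x y assume xy: "(x, y) \<in> r"
    then have "x \<in> A" using assms equiv_type by blast
    then have "r `` {x} \<in> A // r" "x \<in> r `` {x}"
      using assms equiv_class_self quotientI by fastforce+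
    then show "(x, y) \<in> block_rel (A // r)" using xy unfolding block_rel_def by blast
  qed
qed

lemma partition_on_block_rel_inject:
  assumes "partition_on A P" "partition_on A Q" "block_rel P = block_rel Q"
  shows "P = Q"
proof -
  have "P = A // block_rel P"
    using partition_on_eq_quotient[OF assms(1)] unfolding block_rel_def by simp
  also have "\<dots> = Q"
    using partition_on_eq_quotient[OF assms(2)] assms(3) unfolding block_rel_def by simp
  finally show ?thesis .
qed

lemma partition_on_block_eq:
  "partition_on A P \<Longrightarrow> B \<in> P \<Longrightarrow> C \<in> P \<Longrightarrow> x \<in> B \<Longrightarrow> x \<in> C \<Longrightarrow> B = C"
  using partition_onD2 unfolding disjoint_def by blast

lemma refines_iff_block_rel:
  assumes P: "partition_on A P" and Q: "partition_on A Q"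
  shows "refines P Q \<longleftrightarrow> block_rel P \<subseteq> block_rel Q"
proof
  assume "refines P Q"
  show "block_rel P \<subseteq> block_rel Q"
  proof (rule subrelI)
    fix x y assume "(x, y) \<in> block_rel P"
    then obtain p where p: "p \<in> P" "x \<in> p" "y \<in> p" unfolding block_rel_def by blast
    then have "x \<in> A" using P partition_onD1 by blast
    then obtain B where B: "B \<in> Q" "x \<in> B" using Q partition_onD1 by blast
    then obtain S where S: "S \<subseteq> P" "B = \<Union>S"
      using \<open>refines P Q\<close> unfolding refines_def by blast
    then obtain p' where "p' \<in> S" "x \<in> p'" using B by blast
    then have "p' = p" using partition_on_block_eq[OF P] p S by blast
    then show "(x, y) \<in> block_rel Q"
      using p B S \<open>p' \<in> S\<close> unfolding block_rel_def by blast
  qed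
next
  assume sub: "block_rel P \<subseteq> block_rel Q"
  show "refines P Q" unfolding refines_def
  proof
    fix B assume B: "B \<in> Q"
    have cover: "B \<subseteq> \<Union>{p \<in> P. p \<subseteq> B}"
    proof
      fix x assume x: "x \<in> B"
      then have "x \<in> A" using B Q partition_onD1 by blast
      then obtain p where p: "p \<in> P" "x \<in> p" using P partition_onD1 by blast
      have "p \<subseteq> B"
      proof
        fix y assume "y \<in> p"
        then obtain B' where "B' \<in> Q" "x \<in> B'" "y \<in> B'"
          using sub p unfolding block_rel_def by blast
        then show "y \<in> B" using partition_on_block_eq[OF Q B] x by blast
      qed
      then show "x \<in> \<Union>{p \<in> P. p \<subseteq> B}" using p by blast
    qed
    show "\<exists>S\<subseteq>P. B = \<Union>S"
    proof (intro exI conjI)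
      show "{p \<in> P. p \<subseteq> B} \<subseteq> P" by blast
      show "B = \<Union>{p \<in> P. p \<subseteq> B}" using cover by blast
    qed
  qed
qed

definition merge_rel :: "('a \<times> 'a) set \<Rightarrow> 'a \<Rightarrow> 'a \<Rightarrow> ('a \<times> 'a) set" where
  "merge_rel R a b = R \<union> (R `` {a, b}) \<times> (R `` {a, b})"

lemma equiv_merge_rel:
  assumes R: "equiv A R" shows "equiv A (merge_rel R a b)"
proof (rule equivI)
  have RA: "R \<subseteq> A \<times> A" and refl: "refl_on A R" and "sym R" "trans R"
    using R by (auto elim: equivE)
  show "merge_rel R a b \<subseteq> A \<times> A" using RA unfolding merge_rel_def by blast
  show "refl_on A (merge_rel R a b)"
    using refl RA unfolding merge_rel_def refl_on_def by blast
  show "sym (merge_rel R a b)"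
    using \<open>sym R\<close> unfolding merge_rel_def sym_def by blast
  have closed: "z \<in> R `` {a, b}" if "(y, z) \<in> R" "y \<in> R `` {a, b}" for y z
    using that \<open>trans R\<close> unfolding trans_def by blast
  show "trans (merge_rel R a b)"
  proof (rule transI)
    fix x y z assume xy: "(x, y) \<in> merge_rel R a b" and yz: "(y, z) \<in> merge_rel R a b"
    consider "(x, y) \<in> R" "(y, z) \<in> R" | "y \<in> R `` {a, b}" "x \<in> R `` {a, b} \<or> z \<in> R `` {a, b}"
      using xy yz unfolding merge_rel_def by blast
    then show "(x, z) \<in> merge_rel R a b"
    proof cases
      case 1 then show ?thesis using \<open>trans R\<close> unfolding merge_rel_def trans_def by blast
    next
      case 2
      then have "x \<in> R `` {a, b}" "z \<in> R `` {a, b}"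
        using xy yz closed \<open>sym R\<close> unfolding merge_rel_def sym_def by blast+
      then show ?thesis unfolding merge_rel_def by blast
    qed
  qed
qed

lemma merge_rel_trivial:
  assumes "equiv A R" "(a, b) \<in> R" shows "merge_rel R a b = R"
proof -
  have "R `` {a, b} = R `` {a}" using assms equiv_class_eq by fastforce
  then show ?thesis
    using assms equiv_class_eq_iff unfolding merge_rel_def by fastforce
qed

definition detach_rel :: "('a \<times> 'a) set \<Rightarrow> 'a set \<Rightarrow> ('a \<times> 'a) set" where
  "detach_rel R C = Restr R (- C) \<union> C \<times> C"

lemma detach_rel_subset: "C \<times> C \<subseteq> R \<Longrightarrow> detach_rel R C \<subseteq> R"
  unfolding detach_rel_def by blast

lemma equiv_detach_rel:
  assumes R: "equiv A R" and C: "C \<subseteq> A"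
  shows "equiv A (detach_rel R C)"
proof (rule equivI)
  have RA: "R \<subseteq> A \<times> A" and "refl_on A R" "sym R" "trans R" using R by (auto elim: equivE)
  then show "detach_rel R C \<subseteq> A \<times> A" "refl_on A (detach_rel R C)" "sym (detach_rel R C)"
    using C unfolding detach_rel_def refl_on_def sym_def by blast+
  show "trans (detach_rel R C)"
    using \<open>trans R\<close> unfolding detach_rel_def trans_def by blast
qed

lemma merge_rel_detach_rel:
  assumes R: "equiv A R" and CR: "C \<times> C \<subseteq> R"
    and a: "a \<notin> C" and c: "c \<in> C" and ac: "(a, c) \<in> R"
  shows "merge_rel (detach_rel R C) a c = R"
proof
  have "sym R" "trans R" using R by (auto elim: equivE)
  have sub: "detach_rel R C \<subseteq> R" using CR by (rule detach_rel_subset)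
  have "detach_rel R C `` {a, c} \<subseteq> R `` {a}"
    using sub ac \<open>trans R\<close> unfolding trans_def by blast
  then show "merge_rel (detach_rel R C) a c \<subseteq> R"
    using sub \<open>sym R\<close> \<open>trans R\<close> unfolding merge_rel_def sym_def trans_def by blast
  show "R \<subseteq> merge_rel (detach_rel R C) a c"
  proof (rule subrelI)
    fix x y assume xy: "(x, y) \<in> R"
    have "z \<in> detach_rel R C `` {a, c}" if "(z, c) \<in> R" for z
    proof (cases "z \<in> C")
      case True then show ?thesis using c unfolding detach_rel_def by blast
    next
      case False
      then have "(a, z) \<in> R" using that ac \<open>sym R\<close> \<open>trans R\<close> unfolding sym_def trans_def by blast
      then show ?thesis using False a unfolding detach_rel_def by blast
    qed
    moreover have "(x, c) \<in> R \<and> (y, c) \<in> R" if "x \<in> C \<or> y \<in> C"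
      using that xy CR c \<open>sym R\<close> \<open>trans R\<close> unfolding sym_def trans_def by blast
    ultimately show "(x, y) \<in> merge_rel (detach_rel R C) a c"
      using xy unfolding merge_rel_def detach_rel_def by blast
  qed
qed

lemma equiv_Restr_inv_image:
  assumes R: "equiv A R" and f: "\<And>x. x \<in> A \<Longrightarrow> f x \<in> A"
  shows "equiv A (Restr (inv_image R f) A)"
proof (rule equivI)
  have "refl_on A R" "sym R" "trans R" using R by (auto elim: equivE)
  then show "Restr (inv_image R f) A \<subseteq> A \<times> A" "refl_on A (Restr (inv_image R f) A)"
      "sym (Restr (inv_image R f) A)" "trans (Restr (inv_image R f) A)"
    using f unfolding refl_on_def sym_def trans_def inv_image_def by blast+
qed

section \<open>Products with diagrams of permutations\<close>

definition pm_rel :: "nat \<Rightarrow> setpart \<Rightarrow> setpart \<Rightarrow> (nat \<times> nat) set" where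
  "pm_rel n I H = {(p, q). p \<in> {1..2*n} \<and> q \<in> {1..2*n} \<and>
     (pm_lift n p, pm_lift n q) \<in> (pm_link n I H)\<^sup>*}"

lemma pm_link_eq: "pm_link n I H = block_rel I \<union> {(a + n, b + n) | a b. (a, b) \<in> block_rel H}"
  unfolding pm_link_def block_rel_def by blast

lemma equiv_pm_rel: "equiv {1..2*n} (pm_rel n I H)"
proof (rule equivI)
  have "sym (pm_link n I H)" unfolding pm_link_def sym_def by blast
  then show "sym (pm_rel n I H)" using sym_rtrancl unfolding pm_rel_def sym_def by blast
  show "pm_rel n I H \<subseteq> {1..2*n} \<times> {1..2*n}" unfolding pm_rel_def by auto
  show "refl_on {1..2*n} (pm_rel n I H)" unfolding pm_rel_def refl_on_def by auto
  show "trans (pm_rel n I H)" unfolding pm_rel_def trans_def by (auto intro: rtrancl_trans)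
qed

lemma pm_mult_eq_quotient: "pm_mult n I H = {1..2*n} // pm_rel n I H"
proof -
  have "{1..2*n} // pm_rel n I H = (\<lambda>x. pm_rel n I H `` {x}) ` {1..2*n}"
    unfolding quotient_def by blast
  then show ?thesis unfolding pm_mult_def by (auto simp: pm_rel_def intro!: image_cong)
qed

lemma partition_on_pm_mult: "partition_on {1..2*n} (pm_mult n I H)"
  unfolding pm_mult_eq_quotient by (rule partition_on_quotient[OF equiv_pm_rel])

lemma block_rel_pm_mult: "block_rel (pm_mult n I H) = pm_rel n I H"
  unfolding pm_mult_eq_quotient by (rule block_rel_quotient[OF equiv_pm_rel])

lemma block_rel_pm_mult_mono:
  assumes "block_rel I \<subseteq> block_rel J" "block_rel H \<subseteq> block_rel K"
  shows "block_rel (pm_mult n I H) \<subseteq> block_rel (pm_mult n J K)"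
proof -
  have "pm_link n I H \<subseteq> pm_link n J K" using assms unfolding pm_link_eq by blast
  then show ?thesis unfolding block_rel_pm_mult pm_rel_def using rtrancl_mono by blast
qed

lemma block_rel_pm_mult_top:
  assumes "(a, b) \<in> block_rel J" "a \<in> {1..n}" "b \<in> {1..n}"
  shows "(a, b) \<in> block_rel (pm_mult n J K)"
  using assms unfolding block_rel_pm_mult pm_rel_def pm_link_eq pm_lift_def by auto

definition perm_diagram :: "nat \<Rightarrow> (nat \<Rightarrow> nat) \<Rightarrow> setpart" where
  "perm_diagram n w = (\<lambda>k. {k, n + w k}) ` {1..n}"

definition merged_diagram :: "nat \<Rightarrow> (nat \<Rightarrow> nat) \<Rightarrow> nat \<Rightarrow> nat \<Rightarrow> setpart" where
  "merged_diagram n w i j =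
     (\<lambda>k. {k, n + w k}) ` ({1..n} - {i, j}) \<union> {{i, j, n + w i, n + w j}}"

lemma merged_diagram_same: "i \<in> {1..n} \<Longrightarrow> merged_diagram n w i i = perm_diagram n w"
  unfolding merged_diagram_def perm_diagram_def by auto

lemma merged_diagram_commute: "merged_diagram n w i j = merged_diagram n w j i"
  unfolding merged_diagram_def by (simp add: insert_commute)

lemma block_rel_perm_diagram:
  "(x, y) \<in> block_rel (perm_diagram n w) \<longleftrightarrow> (\<exists>k\<in>{1..n}. x \<in> {k, n + w k} \<and> y \<in> {k, n + w k})"
  unfolding perm_diagram_def block_rel_def by blast

lemma block_rel_perm_diagram_column: "k \<in> {1..n} \<Longrightarrow> (k, n + w k) \<in> block_rel (perm_diagram n w)"
  unfolding block_rel_perm_diagram by blast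

lemma block_rel_merged_diagram:
  "(x, y) \<in> block_rel (merged_diagram n w i j) \<longleftrightarrow>
     (\<exists>k\<in>{1..n} - {i, j}. x \<in> {k, n + w k} \<and> y \<in> {k, n + w k}) \<or>
     x \<in> {i, j, n + w i, n + w j} \<and> y \<in> {i, j, n + w i, n + w j}"
  unfolding merged_diagram_def block_rel_def by auto

lemma ex_perm_diagram_column:
  fixes n :: nat
  assumes w: "w permutes {1..n}" and x: "x \<in> {1..2*n}"
  obtains k where "k \<in> {1..n}" "x \<in> {k, n + w k}"
proof (cases "x \<le> n")
  case True then show ?thesis using that[of x] x by simp
next
  case False
  then have "x - n \<in> {1..n}" using x by auto
  then have "inv w (x - n) \<in> {1..n}" using permutes_in_image[OF permutes_inv[OF w]] by blast
  then show ?thesis using that[of "inv w (x - n)"] False permutes_inverses(1)[OF w] by simp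
qed

lemma mem_merged_diagram_iff:
  "B \<in> merged_diagram n w i j \<longleftrightarrow>
     B = {i, j, n + w i, n + w j} \<or> B \<in> (\<lambda>k. {k, n + w k}) ` ({1..n} - {i, j})"
  unfolding merged_diagram_def by simp

lemma Union_merged_diagram:
  assumes w: "w permutes {1..n}" and i: "i \<in> {1..n}" and j: "j \<in> {1..n}"
  shows "\<Union>(merged_diagram n w i j) = {1..2*n}"
proof
  have column: "{k, n + w k} \<subseteq> {1..2*n}" if "k \<in> {1..n}" for k
  proof -
    have "w k \<in> {1..n}" using permutes_in_image[OF w] that by blast
    then show ?thesis using that by auto
  qed
  show "\<Union>(merged_diagram n w i j) \<subseteq> {1..2*n}"
  proof (rule Union_least)
    fix B assume "B \<in> merged_diagram n w i j"
    then consider "B = {i, j, n + w i, n + w j}" | k where "k \<in> {1..n}" "B = {k, n + w k}"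
      unfolding mem_merged_diagram_iff by blast
    then show "B \<subseteq> {1..2*n}"
    proof cases
      case 1 then show ?thesis using column[OF i] column[OF j] by auto
    next
      case (2 k) then show ?thesis using column by blast
    qed
  qed
  show "{1..2*n} \<subseteq> \<Union>(merged_diagram n w i j)"
  proof
    fix x assume "x \<in> {1..2*n}"
    then obtain k where k: "k \<in> {1..n}" "x \<in> {k, n + w k}" by (rule ex_perm_diagram_column[OF w])
    show "x \<in> \<Union>(merged_diagram n w i j)"
    proof (cases "k \<in> {i, j}")
      case True
      have "{i, j, n + w i, n + w j} \<in> merged_diagram n w i j" unfolding mem_merged_diagram_iff by simp
      moreover have "x \<in> {i, j, n + w i, n + w j}" using True k(2) by blast
      ultimately show ?thesis by blast
    next
      case False
      then have "{k, n + w k} \<in> (\<lambda>k. {k, n + w k}) ` ({1..n} - {i, j})" using k(1) by blast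
      then have "{k, n + w k} \<in> merged_diagram n w i j" unfolding mem_merged_diagram_iff by (rule disjI2)
      then show ?thesis using k(2) by blast
    qed
  qed
qed

lemma disjoint_merged_diagram:
  assumes w: "w permutes {1..n}" and i: "i \<in> {1..n}" and j: "j \<in> {1..n}"
  shows "disjoint (merged_diagram n w i j)"
proof (rule pairwiseI)
  have w_in: "1 \<le> w k \<and> w k \<le> n" if "k \<in> {1..n}" for k
    using permutes_in_image[OF w] that by simp
  have w_eq: "w k = w k' \<longleftrightarrow> k = k'" for k k'
    using permutes_inj[OF w] by (auto dest: injD)
  have disjnt_column: "disjnt {k, n + w k} B"
    if k: "k \<in> {1..n} - {i, j}" and B: "B \<in> merged_diagram n w i j" "B \<noteq> {k, n + w k}" for k B
  proof (cases "B = {i, j, n + w i, n + w j}")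
    case True
    then show ?thesis
      using k i j w_in[of k] w_in[of i] w_in[of j] w_eq[of k i] w_eq[of k j]
      unfolding disjnt_def by simp
  next
    case False
    then have "B \<in> (\<lambda>k. {k, n + w k}) ` ({1..n} - {i, j})" using B(1) unfolding mem_merged_diagram_iff by simp
    then obtain k' where k': "k' \<in> {1..n} - {i, j}" "B = {k', n + w k'}" by blast
    then have "k \<noteq> k'" using B(2) by auto
    then show ?thesis
      using k k' w_in[of k] w_in[of k'] w_eq[of k k'] unfolding disjnt_def by simp
  qed
  fix p q assume p: "p \<in> merged_diagram n w i j" and q: "q \<in> merged_diagram n w i j" and "p \<noteq> q"
  show "disjnt p q"
  proof (cases "p = {i, j, n + w i, n + w j}")
    case True
    then have "q \<noteq> {i, j, n + w i, n + w j}" using \<open>p \<noteq> q\<close> by simp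
    then have "q \<in> (\<lambda>k. {k, n + w k}) ` ({1..n} - {i, j})" using q unfolding mem_merged_diagram_iff by simp
    then obtain k where k: "k \<in> {1..n} - {i, j}" "q = {k, n + w k}" by blast
    then show ?thesis using disjnt_column[OF k(1) p] \<open>p \<noteq> q\<close> by (simp add: disjnt_sym)
  next
    case False
    then have "p \<in> (\<lambda>k. {k, n + w k}) ` ({1..n} - {i, j})" using p unfolding mem_merged_diagram_iff by simp
    then obtain k where k: "k \<in> {1..n} - {i, j}" "p = {k, n + w k}" by blast
    then show ?thesis using disjnt_column[OF k(1) q] \<open>p \<noteq> q\<close> by simp
  qed
qed

lemma partition_on_merged_diagram:
  assumes "w permutes {1..n}" "i \<in> {1..n}" "j \<in> {1..n}"
  shows "partition_on {1..2*n} (merged_diagram n w i j)"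
  unfolding partition_on_def
  using Union_merged_diagram[OF assms] disjoint_merged_diagram[OF assms]
  by (auto simp: mem_merged_diagram_iff)

lemma partition_on_perm_diagram:
  assumes "w permutes {1..n}" shows "partition_on {1..2*n} (perm_diagram n w)"
proof (cases "n = 0")
  case True then show ?thesis by (simp add: perm_diagram_def partition_on_empty)
next
  case False
  then show ?thesis
    using partition_on_merged_diagram[OF assms, of 1 1] merged_diagram_same[of 1 n w] by simp
qed

definition relabel :: "nat \<Rightarrow> (nat \<Rightarrow> nat) \<Rightarrow> nat \<Rightarrow> nat" where
  "relabel n v x = (if x \<le> n then x else n + v (x - n))"

lemma relabel_id [simp]: "relabel n id x = x"
  unfolding relabel_def by simp

lemma relabel_in:
  assumes v: "v permutes {1..n}" and x: "x \<in> {1..2*n}"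
  shows "relabel n v x \<in> {1..2*n}"
proof (cases "x \<le> n")
  case False
  then have "x - n \<in> {1..n}" using x by auto
  then have "v (x - n) \<in> {1..n}" using permutes_in_image[OF v] by blast
  then show ?thesis using False unfolding relabel_def by auto
qed (use x in \<open>auto simp: relabel_def\<close>)

lemma relabel_relabel_inv:
  assumes v: "v permutes {1..n}" and x: "x \<in> {1..2*n}"
  shows "relabel n v (relabel n (inv v) x) = x"
proof (cases "x \<le> n")
  case False
  then have "x - n \<in> {1..n}" using x by auto
  then have "inv v (x - n) \<in> {1..n}" using permutes_in_image[OF permutes_inv[OF v]] by blast
  then show ?thesis using False permutes_inverses(1)[OF v] unfolding relabel_def by simp
qed (simp add: relabel_def)

lemma relabel_eq_iff:
  assumes v: "v permutes {1..n}" and x: "x \<in> {1..2*n}" and k: "k \<in> {1..n}"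
  shows relabel_eq_top: "relabel n v x = k \<longleftrightarrow> x = k"
    and relabel_eq_bottom: "relabel n v x = n + v k \<longleftrightarrow> x = n + k"
proof -
  have vk: "v k \<in> {1..n}" using permutes_in_image[OF v] k by blast
  have vx: "v (x - n) \<in> {1..n}" if "\<not> x \<le> n"
  proof -
    have "x - n \<in> {1..n}" using that x by auto
    then show ?thesis using permutes_in_image[OF v] by blast
  qed
  show "relabel n v x = k \<longleftrightarrow> x = k"
    using k vx unfolding relabel_def by auto
  show "relabel n v x = n + v k \<longleftrightarrow> x = n + k"
    using k vk unfolding relabel_def by (auto simp: inj_eq[OF permutes_inj[OF v]])
qed

lemma partition_on_eqI_relabel:
  assumes v: "v permutes {1..n}"
    and P: "partition_on {1..2*n} P" and Q: "partition_on {1..2*n} Q"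
    and PQ: "\<And>x y. x \<in> {1..2*n} \<Longrightarrow> y \<in> {1..2*n} \<Longrightarrow>
      (relabel n v x, relabel n v y) \<in> block_rel P \<longleftrightarrow> (relabel n v x, relabel n v y) \<in> block_rel Q"
  shows "P = Q"
proof (rule partition_on_block_rel_inject[OF P Q])
  have "(a, b) \<in> block_rel P \<longleftrightarrow> (a, b) \<in> block_rel Q" for a b
  proof (cases "a \<in> {1..2*n} \<and> b \<in> {1..2*n}")
    case True
    let ?x = "relabel n (inv v) a" and ?y = "relabel n (inv v) b"
    have "?x \<in> {1..2*n}" "?y \<in> {1..2*n}" using True relabel_in[OF permutes_inv[OF v]] by auto
    from PQ[OF this] show ?thesis using True relabel_relabel_inv[OF v] by simp
  next
    case False
    then show ?thesis using block_rel_memD[OF P] block_rel_memD[OF Q] by blast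
  qed
  then show "block_rel P = block_rel Q" by auto
qed

lemma relabel_mem_column:
  assumes u: "u permutes {1..n}" and v: "v permutes {1..n}"
    and z: "z \<in> {1..2*n}" and k: "k \<in> {1..n}"
  shows "relabel n v z \<in> {k, n + v (u k)} \<longleftrightarrow> z \<in> {k, n + u k}"
proof -
  have "u k \<in> {1..n}" using k permutes_in_image[OF u] by blast
  then show ?thesis
    using relabel_eq_top[OF v z k] relabel_eq_bottom[OF v z \<open>u k \<in> {1..n}\<close>] by auto
qed

lemma block_rel_perm_diagram_relabel:
  assumes u: "u permutes {1..n}" and v: "v permutes {1..n}"
    and x: "x \<in> {1..2*n}" and y: "y \<in> {1..2*n}"
  shows "(relabel n v x, relabel n v y) \<in> block_rel (perm_diagram n (v \<circ> u))
    \<longleftrightarrow> (x, y) \<in> block_rel (perm_diagram n u)"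
  unfolding block_rel_perm_diagram o_def
  using relabel_mem_column[OF u v x] relabel_mem_column[OF u v y] by auto

lemma block_rel_merged_diagram_relabel:
  assumes u: "u permutes {1..n}" and v: "v permutes {1..n}"
    and i: "i \<in> {1..n}" and j: "j \<in> {1..n}" and x: "x \<in> {1..2*n}" and y: "y \<in> {1..2*n}"
  shows "(relabel n v x, relabel n v y) \<in> block_rel (merged_diagram n (v \<circ> u) i j)
    \<longleftrightarrow> (x, y) \<in> block_rel (merged_diagram n u i j)"
proof -
  have "relabel n v z \<in> {i, j, n + v (u i), n + v (u j)} \<longleftrightarrow> z \<in> {i, j, n + u i, n + u j}"
    if "z \<in> {1..2*n}" for z
    using relabel_mem_column[OF u v that i] relabel_mem_column[OF u v that j] by auto
  then show ?thesis
    unfolding block_rel_merged_diagram o_def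
    using relabel_mem_column[OF u v x] relabel_mem_column[OF u v y] x y by auto
qed

text \<open>
  In the picture glued by pm_link the second factor occupies the points n+1..3n. For the diagram
  of v, collapse moves its bottom point 2n + v k to the point n + k of the same block and fixes
  the points 1..2n.
\<close>

definition collapse :: "nat \<Rightarrow> (nat \<Rightarrow> nat) \<Rightarrow> nat \<Rightarrow> nat" where
  "collapse n v z = (if z \<le> 2*n then z else n + inv v (z - 2*n))"

lemma collapse_pm_lift_relabel:
  assumes v: "v permutes {1..n}" and z: "z \<in> {1..2*n}"
  shows "collapse n v (pm_lift n (relabel n v z)) = z"
proof (cases "z \<le> n")
  case False
  then have "z - n \<in> {1..n}" using z by auto
  then have "v (z - n) \<in> {1..n}" using permutes_in_image[OF v] by blast
  then show ?thesis
    using False permutes_inverses(2)[OF v] unfolding collapse_def relabel_def pm_lift_def by auto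
qed (use z in \<open>auto simp: collapse_def relabel_def pm_lift_def\<close>)

lemma collapse_column:
  assumes v: "v permutes {1..n}" and k: "k \<in> {1..n}" and a: "a \<in> {k, n + v k}"
  shows "collapse n v (a + n) = n + k"
proof -
  have "v k \<in> {1..n}" using permutes_in_image[OF v] k by blast
  then show ?thesis
    using a k permutes_inverses(2)[OF v] unfolding collapse_def by auto
qed

context
  fixes n :: nat and J :: setpart and v :: "nat \<Rightarrow> nat" and i j :: nat
  assumes J: "partition_on {1..2*n} J" and v: "v permutes {1..n}"
    and i: "i \<in> {1..n}" and j: "j \<in> {1..n}"
begin

lemma collapse_pm_link_merged_diagram:
  assumes "(z1, z2) \<in> pm_link n J (merged_diagram n v i j)"
  shows "(collapse n v z1, collapse n v z2) \<in> merge_rel (block_rel J) (n + i) (n + j)"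
proof -
  from assms consider "(z1, z2) \<in> block_rel J"
    | a b where "(a, b) \<in> block_rel (merged_diagram n v i j)" "z1 = a + n" "z2 = b + n"
    unfolding pm_link_eq by blast
  then show ?thesis
  proof cases
    case 1
    then have "z1 \<le> 2*n" "z2 \<le> 2*n" using block_rel_memD[OF J] by auto
    then show ?thesis using 1 unfolding collapse_def merge_rel_def by simp
  next
    case (2 a b)
    from 2(1) consider k where "k \<in> {1..n}" "a \<in> {k, n + v k}" "b \<in> {k, n + v k}"
      | "a \<in> {i, j, n + v i, n + v j}" "b \<in> {i, j, n + v i, n + v j}"
      unfolding block_rel_merged_diagram by blast
    then show ?thesis
    proof cases
      case (1 k)
      then have "collapse n v z1 = n + k" "collapse n v z2 = n + k" "n + k \<in> {1..2*n}"
        using collapse_column[OF v] 2 by auto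
      then show ?thesis using equiv_merge_rel[OF equiv_block_rel[OF J]] by (simp add: equiv_def refl_on_def)
    next
      case 2
      have "collapse n v (c + n) \<in> {n + i, n + j}" if "c \<in> {i, j, n + v i, n + v j}" for c
        using that collapse_column[OF v i, of c] collapse_column[OF v j, of c] by auto
      then have "collapse n v z1 \<in> {n + i, n + j}" "collapse n v z2 \<in> {n + i, n + j}"
        using 2 \<open>z1 = a + n\<close> \<open>z2 = b + n\<close> by auto
      moreover have "{n + i, n + j} \<subseteq> block_rel J `` {n + i, n + j}"
        using block_rel_refl[OF J, of "n + i"] block_rel_refl[OF J, of "n + j"] i j by auto
      ultimately show ?thesis unfolding merge_rel_def by blast
    qed
  qed
qed

lemma collapse_pm_link_rtrancl_merged_diagram:
  assumes "(z1, z2) \<in> (pm_link n J (merged_diagram n v i j))\<^sup>*"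
  shows "z1 = z2 \<or> (collapse n v z1, collapse n v z2) \<in> merge_rel (block_rel J) (n + i) (n + j)"
  using assms
proof (induction rule: rtrancl_induct)
  case (step y z)
  have "trans (merge_rel (block_rel J) (n + i) (n + j))"
    using equiv_merge_rel[OF equiv_block_rel[OF J]] by (rule equivE)
  then show ?case
    using step collapse_pm_link_merged_diagram[OF step(2)] unfolding trans_def by blast
qed simp

lemma pm_link_rtrancl_pm_lift_relabel:
  assumes z: "z \<in> {1..2*n}"
  shows "(z, pm_lift n (relabel n v z)) \<in> (pm_link n J (merged_diagram n v i j))\<^sup>*"
proof (cases "z \<le> n")
  case True then show ?thesis unfolding relabel_def pm_lift_def by simp
next
  case False
  then have k: "z - n \<in> {1..n}" using z by auto
  then have "v (z - n) \<in> {1..n}" using permutes_in_image[OF v] by blast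
  then have "pm_lift n (relabel n v z) = (n + v (z - n)) + n"
    using False unfolding relabel_def pm_lift_def by simp
  moreover have "(z - n, n + v (z - n)) \<in> block_rel (merged_diagram n v i j)"
    using k unfolding block_rel_merged_diagram by (cases "z - n \<in> {i, j}") auto
  then have "((z - n) + n, (n + v (z - n)) + n) \<in> pm_link n J (merged_diagram n v i j)"
    unfolding pm_link_eq by blast
  ultimately show ?thesis using False by (simp add: r_into_rtrancl)
qed

lemma merge_rel_imp_pm_link_rtrancl_merged_diagram:
  assumes x: "x \<in> {1..2*n}" and y: "y \<in> {1..2*n}"
    and xy: "(x, y) \<in> merge_rel (block_rel J) (n + i) (n + j)"
  shows "(pm_lift n (relabel n v x), pm_lift n (relabel n v y)) \<in> (pm_link n J (merged_diagram n v i j))\<^sup>*"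
proof -
  let ?L = "pm_link n J (merged_diagram n v i j)"
  have sym: "sym (?L\<^sup>*)" by (rule sym_rtrancl) (auto simp: pm_link_def sym_def)
  have J_L: "(a, b) \<in> ?L\<^sup>*" if "(a, b) \<in> block_rel J" for a b
    using that unfolding pm_link_eq by blast
  have K_L: "(a + n, b + n) \<in> ?L\<^sup>*" if "(a, b) \<in> block_rel (merged_diagram n v i j)" for a b
    using that unfolding pm_link_eq by blast
  have "(x, y) \<in> ?L\<^sup>*"
  proof (cases "(x, y) \<in> block_rel J")
    case True then show ?thesis by (rule J_L)
  next
    case False
    then obtain c d where cd: "c \<in> {n + i, n + j}" "d \<in> {n + i, n + j}"
      "(c, x) \<in> block_rel J" "(d, y) \<in> block_rel J"
      using xy unfolding merge_rel_def by blast
    have "(i, j) \<in> block_rel (merged_diagram n v i j)" "(j, i) \<in> block_rel (merged_diagram n v i j)"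
      unfolding block_rel_merged_diagram by auto
    then have "(c, d) \<in> ?L\<^sup>*" using cd(1,2) K_L by (auto simp: add.commute)
    moreover have "(x, c) \<in> ?L\<^sup>*" using J_L[OF block_rel_sym[OF cd(3)]] .
    moreover have "(d, y) \<in> ?L\<^sup>*" using J_L[OF cd(4)] .
    ultimately show ?thesis by (meson rtrancl_trans)
  qed
  then show ?thesis
    using pm_link_rtrancl_pm_lift_relabel[OF x] pm_link_rtrancl_pm_lift_relabel[OF y] sym
    unfolding sym_def by (meson rtrancl_trans)
qed

lemma block_rel_pm_mult_merged_diagram:
  assumes x: "x \<in> {1..2*n}" and y: "y \<in> {1..2*n}"
  shows "(relabel n v x, relabel n v y) \<in> block_rel (pm_mult n J (merged_diagram n v i j))
    \<longleftrightarrow> (x, y) \<in> merge_rel (block_rel J) (n + i) (n + j)"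
proof -
  have "(relabel n v x, relabel n v y) \<in> block_rel (pm_mult n J (merged_diagram n v i j))
    \<longleftrightarrow> (pm_lift n (relabel n v x), pm_lift n (relabel n v y))
          \<in> (pm_link n J (merged_diagram n v i j))\<^sup>*"
    unfolding block_rel_pm_mult pm_rel_def using relabel_in[OF v] x y by auto
  also have "\<dots> \<longleftrightarrow> (x, y) \<in> merge_rel (block_rel J) (n + i) (n + j)"
  proof
    assume "(pm_lift n (relabel n v x), pm_lift n (relabel n v y))
      \<in> (pm_link n J (merged_diagram n v i j))\<^sup>*"
    from collapse_pm_link_rtrancl_merged_diagram[OF this]
    show "(x, y) \<in> merge_rel (block_rel J) (n + i) (n + j)"
    proof
      assume "pm_lift n (relabel n v x) = pm_lift n (relabel n v y)"
      then have "x = y" using collapse_pm_lift_relabel[OF v x] collapse_pm_lift_relabel[OF v y] by metis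
      then show ?thesis using equiv_merge_rel[OF equiv_block_rel[OF J]] x by (simp add: equiv_def refl_on_def)
    qed (simp add: collapse_pm_lift_relabel[OF v x] collapse_pm_lift_relabel[OF v y])
  qed (rule merge_rel_imp_pm_link_rtrancl_merged_diagram[OF x y])
  finally show ?thesis .
qed

end

lemma block_rel_pm_mult_perm_diagram:
  assumes J: "partition_on {1..2*n} J" and v: "v permutes {1..n}"
    and x: "x \<in> {1..2*n}" and y: "y \<in> {1..2*n}"
  shows "(relabel n v x, relabel n v y) \<in> block_rel (pm_mult n J (perm_diagram n v))
    \<longleftrightarrow> (x, y) \<in> block_rel J"
proof -
  have one: "1 \<in> {1..n}" using x by auto
  have "(n + 1, n + 1) \<in> block_rel J" using block_rel_refl[OF J] one by auto
  then show ?thesis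
    using block_rel_pm_mult_merged_diagram[OF J v one one x y] merged_diagram_same[OF one]
      merge_rel_trivial[OF equiv_block_rel[OF J]] by simp
qed

lemma pm_mult_perm_diagram:
  assumes u: "u permutes {1..n}" and v: "v permutes {1..n}"
  shows "pm_mult n (perm_diagram n u) (perm_diagram n v) = perm_diagram n (v \<circ> u)"
proof (rule partition_on_eqI_relabel[OF v partition_on_pm_mult
      partition_on_perm_diagram[OF permutes_compose[OF u v]]])
  fix x y assume x: "x \<in> {1..2*n}" and y: "y \<in> {1..2*n}"
  show "(relabel n v x, relabel n v y) \<in> block_rel (pm_mult n (perm_diagram n u) (perm_diagram n v))
    \<longleftrightarrow> (relabel n v x, relabel n v y) \<in> block_rel (perm_diagram n (v \<circ> u))"
    using block_rel_pm_mult_perm_diagram[OF partition_on_perm_diagram[OF u] v x y]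
      block_rel_perm_diagram_relabel[OF u v x y] by simp
qed

lemma block_rel_merged_diagram_id:
  assumes a: "a \<in> {1..n}" and b: "b \<in> {1..n}"
  shows "block_rel (merged_diagram n id a b) = merge_rel (block_rel (perm_diagram n id)) (n + a) (n + b)"
proof -
  have column: "block_rel (perm_diagram n id) `` {n + c} = {c, n + c}" if "c \<in> {1..n}" for c
    using that by (auto simp: block_rel_perm_diagram)
  have "block_rel (perm_diagram n id) `` {n + a, n + b} = {a, b, n + a, n + b}"
    using column[OF a] column[OF b] by auto
  then have merge: "merge_rel (block_rel (perm_diagram n id)) (n + a) (n + b)
      = block_rel (perm_diagram n id) \<union> {a, b, n + a, n + b} \<times> {a, b, n + a, n + b}"
    unfolding merge_rel_def by simp
  show ?thesis
    unfolding merge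
  proof (intro equalityI subrelI)
    fix x y assume "(x, y) \<in> block_rel (merged_diagram n id a b)"
    then consider k where "k \<in> {1..n}" "x \<in> {k, n + k}" "y \<in> {k, n + k}"
      | "x \<in> {a, b, n + a, n + b}" "y \<in> {a, b, n + a, n + b}"
      unfolding block_rel_merged_diagram id_apply by blast
    then show "(x, y) \<in> block_rel (perm_diagram n id) \<union> {a, b, n + a, n + b} \<times> {a, b, n + a, n + b}"
    proof cases
      case (1 k)
      then have "(x, y) \<in> block_rel (perm_diagram n id)" unfolding block_rel_perm_diagram by auto
      then show ?thesis by (rule UnI1)
    qed blast
  next
    fix x y
    assume "(x, y) \<in> block_rel (perm_diagram n id) \<union> {a, b, n + a, n + b} \<times> {a, b, n + a, n + b}"
    then consider k where "k \<in> {1..n}" "x \<in> {k, n + k}" "y \<in> {k, n + k}"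
      | "x \<in> {a, b, n + a, n + b}" "y \<in> {a, b, n + a, n + b}"
      unfolding Un_iff block_rel_perm_diagram mem_Sigma_iff id_apply by blast
    then show "(x, y) \<in> block_rel (merged_diagram n id a b)"
    proof cases
      case (1 k)
      then show ?thesis unfolding block_rel_merged_diagram by (cases "k \<in> {a, b}") auto
    qed (simp add: block_rel_merged_diagram)
  qed
qed

lemma pm_mult_perm_diagram_id_merged_diagram:
  assumes a: "a \<in> {1..n}" and b: "b \<in> {1..n}"
  shows "pm_mult n (perm_diagram n id) (merged_diagram n id a b) = merged_diagram n id a b"
  using block_rel_pm_mult_merged_diagram[OF partition_on_perm_diagram[OF permutes_id] permutes_id a b]
    block_rel_merged_diagram_id[OF a b]
  by (intro partition_on_eqI_relabel[OF permutes_id partition_on_pm_mult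
      partition_on_merged_diagram[OF permutes_id a b]]) simp

section \<open>The monoid R(S_n)\<close>

lemma perm_diagram_in_symgrp: "w permutes {1..n} \<Longrightarrow> perm_diagram n w \<in> symgrp n"
  using partition_on_perm_diagram permutes_in_image
  unfolding symgrp_def setparts_def perm_diagram_def by fastforce

lemma symgrpE:
  assumes P: "P \<in> symgrp n"
  obtains w where "w permutes {1..n}" "P = perm_diagram n w"
proof -
  have Pp: "partition_on {1..2*n} P"
    and blk: "\<And>B. B \<in> P \<Longrightarrow> \<exists>i\<in>{1..n}. \<exists>j\<in>{1..n}. B = {i, n + j}"
    using P unfolding symgrp_def setparts_def by auto
  have ex: "\<exists>j. j \<in> {1..n} \<and> {i, n + j} \<in> P" if i: "i \<in> {1..n}" for i
  proof -
    have "i \<in> \<Union>P" using i partition_onD1[OF Pp] by auto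
    then obtain B where B: "B \<in> P" "i \<in> B" by blast
    then obtain i' j where "i' \<in> {1..n}" "j \<in> {1..n}" "B = {i', n + j}" using blk by blast
    then show ?thesis using B i by auto
  qed
  define w where "w i = (if i \<in> {1..n} then (SOME j. j \<in> {1..n} \<and> {i, n + j} \<in> P) else i)" for i
  have w: "w i \<in> {1..n} \<and> {i, n + w i} \<in> P" if "i \<in> {1..n}" for i
    using someI_ex[OF ex[OF that]] that unfolding w_def by simp
  have "inj_on w {1..n}"
  proof (rule inj_onI)
    fix a b assume a: "a \<in> {1..n}" and b: "b \<in> {1..n}" and "w a = w b"
    then have "{a, n + w a} = {b, n + w b}"
      using partition_on_block_eq[OF Pp, of "{a, n + w a}" "{b, n + w b}" "n + w b"] w[OF a] w[OF b] by simp
    then show "a = b" using a b w[OF a] by (auto simp: doubleton_eq_iff)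
  qed
  then have "w permutes {1..n}"
    by (rule inj_imp_permutes) (use w in \<open>auto simp: w_def\<close>)
  moreover have "P = perm_diagram n w"
  proof
    show "perm_diagram n w \<subseteq> P" using w unfolding perm_diagram_def by auto
    show "P \<subseteq> perm_diagram n w"
    proof
      fix B assume B: "B \<in> P"
      then obtain i j where ij: "i \<in> {1..n}" "j \<in> {1..n}" "B = {i, n + j}" using blk by blast
      then have "B = {i, n + w i}" using partition_on_block_eq[OF Pp B, of "{i, n + w i}" i] w[OF ij(1)] by simp
      then show "B \<in> perm_diagram n w" using ij unfolding perm_diagram_def by auto
    qed
  qed
  ultimately show ?thesis by (rule that)
qed

lemma pm_one_eq: "pm_one n = perm_diagram n id"
  unfolding pm_one_def perm_diagram_def by simp

lemma simple_transp_eq: "simple_transp n r = perm_diagram n (Transposition.transpose r (Suc r))"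
  unfolding simple_transp_def perm_diagram_def by (rule image_cong) (auto simp: transpose_def)

lemma Jmerge_eq:
  assumes i: "i \<in> {1..n}" and j: "j \<in> {1..n}" and "i \<noteq> j"
  shows "Jmerge n i j = merged_diagram n id i j"
proof -
  have "inj_on (\<lambda>k. {k, n + k}) {1..n}" by (auto simp: inj_on_def doubleton_eq_iff)
  then have "(\<lambda>k. {k, n + k}) ` ({1..n} - {i, j}) = pm_one n - {{i, n + i}, {j, n + j}}"
    using inj_on_image_set_diff[of _ "{1..n}" "{1..n}" "{i, j}"] i j unfolding pm_one_def by simp
  moreover have "{i, n + i, j, n + j} = {i, j, n + id i, n + id j}" by auto
  ultimately show ?thesis unfolding Jmerge_def merged_diagram_def by simp
qed

lemma e_gen_eq:
  assumes "i \<in> {1..n}" "j \<in> {1..n}" "i \<noteq> j"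
  shows "e_gen n i j = (perm_diagram n id, merged_diagram n id i j)"
  unfolding e_gen_def pm_one_eq Jmerge_eq[OF assms] ..

lemma transpose_Suc_permutes:
  "r \<in> {1..n-1} \<Longrightarrow> Transposition.transpose r (Suc r) permutes {1..n}"
  by (rule permutes_swap_id) auto

lemma z_gen_eq:
  assumes r: "r \<in> {1..n-1}" and i: "i \<in> {1..n}" and j: "j \<in> {1..n}" and "i \<noteq> j"
  defines "s \<equiv> Transposition.transpose r (Suc r)"
  shows "z_gen n r i j = (perm_diagram n s, merged_diagram n s i j)"
proof -
  have s: "s permutes {1..n}" unfolding s_def using r by (rule transpose_Suc_permutes)
  have "pm_mult n (merged_diagram n id i j) (perm_diagram n s) = merged_diagram n s i j"
  proof (rule partition_on_eqI_relabel[OF s partition_on_pm_mult partition_on_merged_diagram[OF s i j]])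
    fix x y assume x: "x \<in> {1..2*n}" and y: "y \<in> {1..2*n}"
    show "(relabel n s x, relabel n s y) \<in> block_rel (pm_mult n (merged_diagram n id i j) (perm_diagram n s))
      \<longleftrightarrow> (relabel n s x, relabel n s y) \<in> block_rel (merged_diagram n s i j)"
      using block_rel_pm_mult_perm_diagram[OF partition_on_merged_diagram[OF permutes_id i j] s x y]
        block_rel_merged_diagram_relabel[OF permutes_id s i j x y] by simp
  qed
  then show ?thesis
    using pm_mult_perm_diagram[OF permutes_id s]
    unfolding z_gen_def e_gen_eq[OF i j \<open>i \<noteq> j\<close>] RS_mult_def simple_transp_eq s_def by simp
qed

definition joins_top :: "nat \<Rightarrow> setpart \<Rightarrow> bool" where
  "joins_top n J \<longleftrightarrow> (\<exists>a\<in>{1..n}. \<exists>b\<in>{1..n}. a \<noteq> b \<and> (a, b) \<in> block_rel J)"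

lemma joins_top_pm_mult: "joins_top n J \<Longrightarrow> joins_top n (pm_mult n J K)"
  unfolding joins_top_def using block_rel_pm_mult_top by blast

lemma not_joins_top_perm_diagram:
  assumes w: "w permutes {1..n}" shows "\<not> joins_top n (perm_diagram n w)"
proof -
  have "a = b" if a: "a \<in> {1..n}" and b: "b \<in> {1..n}"
    and ab: "(a, b) \<in> block_rel (perm_diagram n w)" for a b
  proof -
    obtain k where k: "k \<in> {1..n}" "a \<in> {k, n + w k}" "b \<in> {k, n + w k}"
      using ab unfolding block_rel_perm_diagram by blast
    have "w k \<in> {1..n}" using permutes_in_image[OF w] k(1) by blast
    then show ?thesis using k a b by auto
  qed
  then show ?thesis unfolding joins_top_def by blast
qed

lemma eq_perm_diagram_if_not_joins_top:
  assumes J: "partition_on {1..2*n} J" and u: "u permutes {1..n}"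
    and sub: "block_rel (perm_diagram n u) \<subseteq> block_rel J" and "\<not> joins_top n J"
  shows "J = perm_diagram n u"
proof (rule partition_on_block_rel_inject[OF J partition_on_perm_diagram[OF u]])
  show "block_rel J = block_rel (perm_diagram n u)"
  proof
    show "block_rel J \<subseteq> block_rel (perm_diagram n u)"
    proof (rule subrelI)
      fix x y assume xy: "(x, y) \<in> block_rel J"
      then have "x \<in> {1..2*n}" "y \<in> {1..2*n}" using block_rel_memD[OF J] by auto
      then obtain k l where k: "k \<in> {1..n}" "x \<in> {k, n + u k}" and l: "l \<in> {1..n}" "y \<in> {l, n + u l}"
        by (meson ex_perm_diagram_column[OF u])
      then have "(k, x) \<in> block_rel (perm_diagram n u)" "(y, l) \<in> block_rel (perm_diagram n u)"
        unfolding block_rel_perm_diagram by blast+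
      then have "(k, x) \<in> block_rel J" "(y, l) \<in> block_rel J" using sub by blast+
      then have "(k, l) \<in> block_rel J" using block_rel_trans[OF J] xy by blast
      then have "k = l" using \<open>\<not> joins_top n J\<close> k(1) l(1) unfolding joins_top_def by blast
      then show "(x, y) \<in> block_rel (perm_diagram n u)"
        unfolding block_rel_perm_diagram using k l by blast
    qed
  qed (rule sub)
qed

lemma RS_E:
  assumes "(I, J) \<in> RS n"
  obtains u where "u permutes {1..n}" "I = perm_diagram n u" "partition_on {1..2*n} J"
    "block_rel (perm_diagram n u) \<subseteq> block_rel J"
proof -
  have I: "I \<in> symgrp n" and J: "partition_on {1..2*n} J" and "refines I J"
    using assms unfolding RS_def setparts_def by auto
  obtain u where u: "u permutes {1..n}" "I = perm_diagram n u" using I by (rule symgrpE)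
  then have "block_rel I \<subseteq> block_rel J"
    using \<open>refines I J\<close> refines_iff_block_rel[OF partition_on_perm_diagram[OF u(1)] J] by simp
  then show ?thesis using that u J by simp
qed

lemma RS_perm_diagramI:
  assumes u: "u permutes {1..n}" and J: "partition_on {1..2*n} J"
    and sub: "block_rel (perm_diagram n u) \<subseteq> block_rel J"
  shows "(perm_diagram n u, J) \<in> RS n"
  using perm_diagram_in_symgrp[OF u] J sub refines_iff_block_rel[OF partition_on_perm_diagram[OF u] J]
  unfolding RS_def setparts_def by simp

lemma RS_mult_closed:
  assumes "x \<in> RS n" "y \<in> RS n" shows "RS_mult n x y \<in> RS n"
proof -
  obtain I J H K where xy: "x = (I, J)" "y = (H, K)" by fastforce
  obtain u where u: "u permutes {1..n}" "I = perm_diagram n u"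
    and "block_rel I \<subseteq> block_rel J" using assms(1) xy(1) by (auto elim: RS_E)
  obtain v where v: "v permutes {1..n}" "H = perm_diagram n v"
    and "block_rel H \<subseteq> block_rel K" using assms(2) xy(2) by (auto elim: RS_E)
  have "block_rel (perm_diagram n (v \<circ> u)) \<subseteq> block_rel (pm_mult n J K)"
    using block_rel_pm_mult_mono[OF \<open>block_rel I \<subseteq> block_rel J\<close> \<open>block_rel H \<subseteq> block_rel K\<close>, of n]
      pm_mult_perm_diagram[OF u(1) v(1)] u(2) v(2) by simp
  then have "(perm_diagram n (v \<circ> u), pm_mult n J K) \<in> RS n"
    by (rule RS_perm_diagramI[OF permutes_compose[OF u(1) v(1)] partition_on_pm_mult])
  then show ?thesis using pm_mult_perm_diagram[OF u(1) v(1)] u(2) v(2) xy unfolding RS_mult_def by simp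
qed

lemma mem_RS_minus_RS_sym_iff: "x \<in> RS n - RS_sym n \<longleftrightarrow> x \<in> RS n \<and> joins_top n (snd x)"
proof (cases "x \<in> RS n")
  case True
  then obtain u J where x: "x = (perm_diagram n u, J)" and u: "u permutes {1..n}"
    and J: "partition_on {1..2*n} J" and sub: "block_rel (perm_diagram n u) \<subseteq> block_rel J"
    by (metis RS_E surj_pair)
  have "x \<in> RS_sym n \<longleftrightarrow> J = perm_diagram n u"
    using x perm_diagram_in_symgrp[OF u] unfolding RS_sym_def by auto
  also have "\<dots> \<longleftrightarrow> \<not> joins_top n J"
    using eq_perm_diagram_if_not_joins_top[OF J u sub] not_joins_top_perm_diagram[OF u] by blast
  finally show ?thesis using True x by simp
qed simp

section \<open>Words in adjacent transpositions\<close>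

lemma apply_adj_transps_append:
  "apply_adj_transps (xs @ ys) = apply_adj_transps xs \<circ> apply_adj_transps ys"
  by (induction xs) (simp_all add: o_assoc)

lemma permutes_imp_apply_adj_transps:
  assumes "p permutes {m..n}"
  shows "\<exists>xs. set xs \<subseteq> {m..<n} \<and> p = apply_adj_transps xs"
  using assms finite_atLeastAtMost
proof (induction rule: permutes_induct)
  case id
  then show ?case by (intro exI[of _ "[]"]) simp
next
  case (swap a b p)
  then obtain ys where ys: "set ys \<subseteq> {m..<n}" "p = apply_adj_transps ys" by blast
  define c d where "c = min a b" and "d = max a b"
  have "c < d" "m \<le> c" "d \<le> n" using swap(1-3) unfolding c_def d_def by auto
  have "Transposition.transpose a b = apply_adj_transps (adj_transp_seq c d)"
    using adj_transp_seq_correct[OF \<open>c < d\<close>]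
    unfolding c_def d_def by (cases "a < b") (auto simp: min_def max_def transpose_commute)
  moreover have "set (adj_transp_seq c d) \<subseteq> {m..<n}"
    using set_adj_transp_seq[OF \<open>c < d\<close>] \<open>m \<le> c\<close> \<open>d \<le> n\<close> by auto
  ultimately show ?case
    using ys by (intro exI[of _ "adj_transp_seq c d @ ys"]) (simp add: apply_adj_transps_append)
qed

lemma permutes_adjacent_induct [consumes 1, case_names id step]:
  assumes "p permutes {m..n}" and "P id"
    and "\<And>q r. q permutes {m..n} \<Longrightarrow> P q \<Longrightarrow> r \<in> {m..<n} \<Longrightarrow>
      P (Transposition.transpose r (Suc r) \<circ> q)"
  shows "P p"
proof -
  obtain xs where xs: "set xs \<subseteq> {m..<n}" "p = apply_adj_transps xs"
    using permutes_imp_apply_adj_transps[OF assms(1)] by blast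
  have "P (apply_adj_transps xs) \<and> apply_adj_transps xs permutes {m..n}"
    using xs(1)
  proof (induction xs)
    case Nil then show ?case using assms(2) permutes_id by (metis apply_adj_transps_Nil)
  next
    case (Cons r xs)
    then have r: "r \<in> {m..<n}" and IH: "P (apply_adj_transps xs)" "apply_adj_transps xs permutes {m..n}"
      by auto
    have "Transposition.transpose r (Suc r) permutes {m..n}"
      using r by (intro permutes_swap_id) auto
    moreover have "apply_adj_transps (r # xs) = Transposition.transpose r (Suc r) \<circ> apply_adj_transps xs"
      by simp
    ultimately show ?case
      using assms(3)[OF IH(2,1) r] permutes_compose[OF IH(2)] by metis
  qed
  then show ?thesis using xs(2) by simp
qed

definition RS_gens :: "nat \<Rightarrow> (setpart \<times> setpart) set" where
  "RS_gens n =
     {z_gen n r i j | r i j. r \<in> {1..n-1} \<and> i \<in> {1..n} \<and> j \<in> {1..n} \<and> i < j}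
     \<union> {e_gen n i j | i j. i \<in> {1..n} \<and> j \<in> {1..n} \<and> i < j}"

lemma RS_minus_RS_sym_mult:
  assumes "x \<in> RS n - RS_sym n" "y \<in> RS n"
  shows "RS_mult n x y \<in> RS n - RS_sym n"
  using assms RS_mult_closed joins_top_pm_mult
  unfolding mem_RS_minus_RS_sym_iff RS_mult_def by simp

lemma e_gen_in_RS_minus_RS_sym:
  assumes i: "i \<in> {1..n}" and j: "j \<in> {1..n}" and "i \<noteq> j"
  shows "e_gen n i j \<in> RS n - RS_sym n"
proof -
  have "block_rel (perm_diagram n id) \<subseteq> block_rel (merged_diagram n id i j)"
  proof (rule subrelI)
    fix x y assume "(x, y) \<in> block_rel (perm_diagram n id)"
    then obtain k where "k \<in> {1..n}" "x \<in> {k, n + k}" "y \<in> {k, n + k}"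
      unfolding block_rel_perm_diagram by auto
    then show "(x, y) \<in> block_rel (merged_diagram n id i j)"
      unfolding block_rel_merged_diagram by (cases "k \<in> {i, j}") auto
  qed
  then have "e_gen n i j \<in> RS n"
    using RS_perm_diagramI[OF permutes_id partition_on_merged_diagram[OF permutes_id i j]]
    unfolding e_gen_eq[OF assms] by simp
  moreover have "joins_top n (merged_diagram n id i j)"
    unfolding joins_top_def block_rel_merged_diagram using assms by blast
  ultimately show ?thesis unfolding mem_RS_minus_RS_sym_iff e_gen_eq[OF assms] by simp
qed

lemma RS_gens_subset: "RS_gens n \<subseteq> RS n - RS_sym n"
proof
  fix g assume "g \<in> RS_gens n"
  then consider i j where "i \<in> {1..n}" "j \<in> {1..n}" "i < j" "g = e_gen n i j"
    | r i j where "r \<in> {1..n-1}" "i \<in> {1..n}" "j \<in> {1..n}" "i < j" "g = z_gen n r i j"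
    unfolding RS_gens_def by blast
  then show "g \<in> RS n - RS_sym n"
  proof cases
    case 1
    then show ?thesis using e_gen_in_RS_minus_RS_sym by blast
  next
    case (2 r i j)
    let ?s = "Transposition.transpose r (Suc r)"
    have s: "?s permutes {1..n}" using 2(1) by (rule transpose_Suc_permutes)
    have "(simple_transp n r, simple_transp n r) \<in> RS n"
      using RS_perm_diagramI[OF s partition_on_perm_diagram[OF s]]
      unfolding simple_transp_eq by simp
    then show ?thesis
      using RS_minus_RS_sym_mult e_gen_in_RS_minus_RS_sym 2 unfolding z_gen_def by simp
  qed
qed

lemma e_gen_generated:
  assumes a: "a \<in> {1..n}" and b: "b \<in> {1..n}" and "a \<noteq> b"
  shows "(perm_diagram n id, merged_diagram n id a b) \<in> gen_semigroup (RS_mult n) (RS_gens n)"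
proof (cases "a < b")
  case True
  then have "e_gen n a b \<in> RS_gens n" using a b unfolding RS_gens_def by blast
  then show ?thesis unfolding e_gen_eq[OF a b \<open>a \<noteq> b\<close>] by (rule gen_semigroup.base)
next
  case False
  then have "b < a" using \<open>a \<noteq> b\<close> by simp
  then have "e_gen n b a \<in> RS_gens n" using a b unfolding RS_gens_def by blast
  then show ?thesis
    unfolding e_gen_eq[OF b a \<open>a \<noteq> b\<close>[symmetric]] merged_diagram_commute[of n id b a]
    by (rule gen_semigroup.base)
qed

lemma z_gen_generated:
  assumes r: "r \<in> {1..n-1}" and a: "a \<in> {1..n}" and b: "b \<in> {1..n}" and "a \<noteq> b"
  defines "s \<equiv> Transposition.transpose r (Suc r)"
  shows "(perm_diagram n s, merged_diagram n s a b) \<in> gen_semigroup (RS_mult n) (RS_gens n)"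
proof (cases "a < b")
  case True
  then have "z_gen n r a b \<in> RS_gens n" using r a b unfolding RS_gens_def by blast
  then show ?thesis unfolding z_gen_eq[OF r a b \<open>a \<noteq> b\<close>] s_def by (rule gen_semigroup.base)
next
  case False
  then have "b < a" using \<open>a \<noteq> b\<close> by simp
  then have "z_gen n r b a \<in> RS_gens n" using r a b unfolding RS_gens_def by blast
  then show ?thesis
    unfolding z_gen_eq[OF r b a \<open>a \<noteq> b\<close>[symmetric]] merged_diagram_commute[of n _ b a] s_def
    by (rule gen_semigroup.base)
qed

lemma ex_detached_factor:
  assumes J: "partition_on {1..2*n} J" and sub: "block_rel (perm_diagram n id) \<subseteq> block_rel J"
    and a: "a \<in> {1..n}" and b: "b \<in> {1..n}" and "a \<noteq> b" and ab: "(a, b) \<in> block_rel J"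
  obtains J' where "partition_on {1..2*n} J'" "block_rel (perm_diagram n id) \<subseteq> block_rel J'"
    "card (block_rel J') < card (block_rel J)" "pm_mult n J' (merged_diagram n id a b) = J"
proof -
  \<comment> \<open>Cut the column {b, n + b} out of its block of J; multiplying by e_{a,b} glues it
    back on through n + a.\<close>
  define C where "C = {b, n + b}"
  define R' where "R' = detach_rel (block_rel J) C"
  define J' where "J' = {1..2*n} // R'"
  have column: "(k, n + k) \<in> block_rel J" if "k \<in> {1..n}" for k
    using sub block_rel_perm_diagram_column[OF that, of id] by auto
  have CJ: "C \<times> C \<subseteq> block_rel J"
    using b column[OF b] block_rel_refl[OF J] block_rel_sym unfolding C_def by auto
  have R': "equiv {1..2*n} R'"
    unfolding R'_def by (rule equiv_detach_rel[OF equiv_block_rel[OF J]]) (use b in \<open>auto simp: C_def\<close>)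
  have J': "partition_on {1..2*n} J'" and block_rel_J': "block_rel J' = R'"
    unfolding J'_def using partition_on_quotient[OF R'] block_rel_quotient[OF R'] by auto
  have sub': "block_rel (perm_diagram n id) \<subseteq> block_rel J'"
    unfolding block_rel_J'
  proof (rule subrelI)
    fix x y assume xy: "(x, y) \<in> block_rel (perm_diagram n id)"
    then obtain k where k: "k \<in> {1..n}" "x \<in> {k, n + k}" "y \<in> {k, n + k}"
      unfolding block_rel_perm_diagram by auto
    have "(x, y) \<in> block_rel J" using xy sub by blast
    then show "(x, y) \<in> R'"
      using k b unfolding R'_def detach_rel_def C_def by (cases "k = b") auto
  qed
  have "finite (block_rel J)"
    by (rule finite_subset[of _ "{1..2*n} \<times> {1..2*n}"]) (use block_rel_memD[OF J] in auto)
  moreover have "R' \<subseteq> block_rel J" unfolding R'_def using CJ by (rule detach_rel_subset)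
  moreover have "(a, b) \<notin> R'" using a b \<open>a \<noteq> b\<close> unfolding R'_def detach_rel_def C_def by auto
  ultimately have smaller: "card (block_rel J') < card (block_rel J)"
    unfolding block_rel_J' using ab by (metis psubset_card_mono psubset_eq)
  have "(n + a, n + b) \<in> block_rel J"
    using block_rel_trans[OF J block_rel_trans[OF J block_rel_sym[OF column[OF a]] ab] column[OF b]] .
  then have "merge_rel R' (n + a) (n + b) = block_rel J"
    unfolding R'_def using merge_rel_detach_rel[OF equiv_block_rel[OF J] CJ] a b \<open>a \<noteq> b\<close>
    by (simp add: C_def)
  then have "pm_mult n J' (merged_diagram n id a b) = J"
    using block_rel_pm_mult_merged_diagram[OF J' permutes_id a b] block_rel_J'
    by (intro partition_on_eqI_relabel[OF permutes_id partition_on_pm_mult J]) simp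
  with J' sub' smaller show ?thesis by (rule that)
qed

lemma perm_diagram_id_generated:
  assumes "partition_on {1..2*n} J" "block_rel (perm_diagram n id) \<subseteq> block_rel J" "joins_top n J"
  shows "(perm_diagram n id, J) \<in> gen_semigroup (RS_mult n) (RS_gens n)"
  using assms
proof (induction "card (block_rel J)" arbitrary: J rule: less_induct)
  case less
  obtain a b where a: "a \<in> {1..n}" and b: "b \<in> {1..n}" and "a \<noteq> b" and "(a, b) \<in> block_rel J"
    using less.prems(3) unfolding joins_top_def by blast
  then obtain J' where J': "partition_on {1..2*n} J'" and sub': "block_rel (perm_diagram n id) \<subseteq> block_rel J'"
    and smaller: "card (block_rel J') < card (block_rel J)"
    and product: "pm_mult n J' (merged_diagram n id a b) = J"
    by (rule ex_detached_factor[OF less.prems(1,2)])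
  show ?case
  proof (cases "joins_top n J'")
    case True
    then have "(perm_diagram n id, J') \<in> gen_semigroup (RS_mult n) (RS_gens n)"
      using less.hyps[OF smaller J' sub'] by blast
    then have "RS_mult n (perm_diagram n id, J') (perm_diagram n id, merged_diagram n id a b)
        \<in> gen_semigroup (RS_mult n) (RS_gens n)"
      using e_gen_generated[OF a b \<open>a \<noteq> b\<close>] by (rule gen_semigroup.step)
    then show ?thesis
      using product pm_mult_perm_diagram[OF permutes_id permutes_id] by (simp add: RS_mult_def)
  next
    case False
    then have "J' = perm_diagram n id" using eq_perm_diagram_if_not_joins_top[OF J' permutes_id sub'] by blast
    then have "J = merged_diagram n id a b"
      using product pm_mult_perm_diagram_id_merged_diagram[OF a b] by simp
    then show ?thesis using e_gen_generated[OF a b \<open>a \<noteq> b\<close>] by simp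
  qed
qed

lemma ex_relabelled_factor:
  assumes u: "u permutes {1..n}" and s: "s permutes {1..n}" and J: "partition_on {1..2*n} J"
    and sub: "block_rel (perm_diagram n (s \<circ> u)) \<subseteq> block_rel J"
    and a: "a \<in> {1..n}" and b: "b \<in> {1..n}" and ab: "(a, b) \<in> block_rel J"
  obtains J0 where "partition_on {1..2*n} J0" "block_rel (perm_diagram n u) \<subseteq> block_rel J0"
    "(a, b) \<in> block_rel J0" "pm_mult n J0 (merged_diagram n s (u a) (u b)) = J"
proof -
  \<comment> \<open>Multiplying on the right by a diagram of s relabels the bottom row along s, so the
    factor J0 is J with its bottom row relabelled backwards.\<close>
  define R0 where "R0 = Restr (inv_image (block_rel J) (relabel n s)) {1..2*n}"
  define J0 where "J0 = {1..2*n} // R0"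
  have R0: "equiv {1..2*n} R0"
    unfolding R0_def by (rule equiv_Restr_inv_image[OF equiv_block_rel[OF J] relabel_in[OF s]])
  have J0: "partition_on {1..2*n} J0" and block_rel_J0: "block_rel J0 = R0"
    unfolding J0_def using partition_on_quotient[OF R0] block_rel_quotient[OF R0] by auto
  have R0_iff: "(x, y) \<in> R0 \<longleftrightarrow>
      x \<in> {1..2*n} \<and> y \<in> {1..2*n} \<and> (relabel n s x, relabel n s y) \<in> block_rel J" for x y
    unfolding R0_def by auto
  have sub0: "block_rel (perm_diagram n u) \<subseteq> block_rel J0"
    unfolding block_rel_J0
  proof (rule subrelI)
    fix x y assume xy: "(x, y) \<in> block_rel (perm_diagram n u)"
    then have x: "x \<in> {1..2*n}" and y: "y \<in> {1..2*n}"
      using block_rel_memD[OF partition_on_perm_diagram[OF u]] by auto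
    then show "(x, y) \<in> R0"
      using xy sub block_rel_perm_diagram_relabel[OF u s x y] unfolding R0_iff by blast
  qed
  have ab0: "(a, b) \<in> R0" using a b ab unfolding R0_iff relabel_def by auto
  have "(c, n + u c) \<in> R0" if "c \<in> {1..n}" for c
    using sub0 block_rel_perm_diagram_column[OF that] unfolding block_rel_J0 by blast
  then have "(n + u a, n + u b) \<in> R0"
    using R0 ab0 a b unfolding equiv_def sym_def trans_def by blast
  then have "merge_rel R0 (n + u a) (n + u b) = R0" by (rule merge_rel_trivial[OF R0])
  moreover have "u a \<in> {1..n}" "u b \<in> {1..n}" using a b permutes_in_image[OF u] by auto
  ultimately have "pm_mult n J0 (merged_diagram n s (u a) (u b)) = J"
    using block_rel_pm_mult_merged_diagram[OF J0 s] block_rel_J0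
    by (intro partition_on_eqI_relabel[OF s partition_on_pm_mult J]) (simp add: R0_iff)
  moreover have "(a, b) \<in> block_rel J0" using ab0 unfolding block_rel_J0 .
  ultimately show ?thesis using that[OF J0 sub0] by blast
qed

lemma perm_diagram_generated:
  assumes "u permutes {1..n}" "partition_on {1..2*n} J"
    "block_rel (perm_diagram n u) \<subseteq> block_rel J" "joins_top n J"
  shows "(perm_diagram n u, J) \<in> gen_semigroup (RS_mult n) (RS_gens n)"
  using assms
proof (induction u arbitrary: J rule: permutes_adjacent_induct)
  case id
  then show ?case by (rule perm_diagram_id_generated)
next
  case (step u r)
  let ?s = "Transposition.transpose r (Suc r)"
  have r: "r \<in> {1..n-1}" using step.hyps(2) by auto
  have s: "?s permutes {1..n}" using r by (rule transpose_Suc_permutes)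
  obtain a b where a: "a \<in> {1..n}" and b: "b \<in> {1..n}" and "a \<noteq> b" and "(a, b) \<in> block_rel J"
    using step.prems(3) unfolding joins_top_def by blast
  obtain J0 where J0: "partition_on {1..2*n} J0"
    and sub0: "block_rel (perm_diagram n u) \<subseteq> block_rel J0" and "(a, b) \<in> block_rel J0"
    and product: "pm_mult n J0 (merged_diagram n ?s (u a) (u b)) = J"
    using a b \<open>(a, b) \<in> block_rel J\<close> by (rule ex_relabelled_factor[OF step.hyps(1) s step.prems(1,2)])
  then have "joins_top n J0" using a b \<open>a \<noteq> b\<close> unfolding joins_top_def by blast
  then have IH: "(perm_diagram n u, J0) \<in> gen_semigroup (RS_mult n) (RS_gens n)"
    using step.IH J0 sub0 by blast
  have ua: "u a \<in> {1..n}" "u b \<in> {1..n}" "u a \<noteq> u b"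
    using a b \<open>a \<noteq> b\<close> permutes_in_image[OF step.hyps(1)] permutes_inj[OF step.hyps(1)]
    by (auto dest: injD)
  have "RS_mult n (perm_diagram n u, J0) (perm_diagram n ?s, merged_diagram n ?s (u a) (u b))
      \<in> gen_semigroup (RS_mult n) (RS_gens n)"
    using IH z_gen_generated[OF r ua] by (rule gen_semigroup.step)
  moreover have "RS_mult n (perm_diagram n u, J0) (perm_diagram n ?s, merged_diagram n ?s (u a) (u b))
      = (perm_diagram n (?s \<circ> u), J)"
    using product pm_mult_perm_diagram[OF step.hyps(1) s] by (simp add: RS_mult_def)
  ultimately show ?case by (simp only:)
qed

theorem proposition5p18:
  fixes n :: nat
  shows "gen_semigroup (RS_mult n)
           ({z_gen n r i j | r i j. r \<in> {1..n-1} \<and> i \<in> {1..n} \<and> j \<in> {1..n} \<and> i < j}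
            \<union> {e_gen n i j | i j. i \<in> {1..n} \<and> j \<in> {1..n} \<and> i < j})
         = RS n - RS_sym n"
proof -
  have "gen_semigroup (RS_mult n) (RS_gens n) \<subseteq> RS n - RS_sym n"
  proof
    fix x assume "x \<in> gen_semigroup (RS_mult n) (RS_gens n)"
    then show "x \<in> RS n - RS_sym n"
      by (induction rule: gen_semigroup.induct) (use RS_gens_subset RS_minus_RS_sym_mult in blast)+
  qed
  moreover have "RS n - RS_sym n \<subseteq> gen_semigroup (RS_mult n) (RS_gens n)"
  proof
    fix x assume x: "x \<in> RS n - RS_sym n"
    then obtain u J where "x = (perm_diagram n u, J)" "u permutes {1..n}" "partition_on {1..2*n} J"
        "block_rel (perm_diagram n u) \<subseteq> block_rel J"
      by (metis DiffD1 RS_E surj_pair)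
    moreover have "joins_top n J" using x \<open>x = (perm_diagram n u, J)\<close> mem_RS_minus_RS_sym_iff by simp
    ultimately show "x \<in> gen_semigroup (RS_mult n) (RS_gens n)" using perm_diagram_generated by blast
  qed
  ultimately show ?thesis unfolding RS_gens_def by blast
qed

end
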